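(* Let $P\in\Psi^q(\mathscr A_\theta)$ with $\Re q<-n$. Then $$\operatorname{Trace}(P)=\int_{\mathbb R^n}\tau\big[\rho(\xi)\big]\,d\xi,$$ where $\rho\in S^q(\mathbb R^n;\mathscr A_\theta)$ is any normalized symbol of $P$, i.e. any $\rho\in S^q(\mathbb R^n;\mathscr A_\theta)$ with $P=P_\rho$ and $\int_{\mathbb R^n}\rho(\xi)\,d\xi=\sum_{k\in\mathbb Z^n}\rho(k)$.
   Context: Fix $n\ge 2$ and a real antisymmetric $n\times n$ matrix $\theta$. The noncommutative torus $A_\theta$ is the $C^*$-algebra generated by unitaries $U_1,\dots,U_n$ with $U_kU_j=e^{2i\pi\theta_{jk}}U_jU_k$; $U^k=U_1^{k_1}\cdots U_n^{k_n}$; $\|\cdot\|$ is the $C^*$-norm; $\tau$ is the continuous trace on $A_\theta$ with $\tau(U^0)=1$, $\tau(U^k)=0$ for $k\neq0$. $\mathcal H_\theta$ is the Hilbert space completion of $A_\theta$ for $(u,v)=\tau(uv^* )$, with orthonormal basis $(U^k)$. $\mathbb R^n$ acts by $*$-automorphisms $\alpha_s$ with $\alpha_s(U^k)=e^{is\cdot k}U^k$; $\mathscr A_\theta$ is the Fréchet algebra of smooth elements (seminorms $u\mapsto\|\delta^\alpha u\|$, $\delta_j(U^k)=k_jU^k$). For $q\in\mathbb C$, $S_q(\mathbb R^n;\mathscr A_\theta)$ is the set of smooth maps $\mathbb R^n\setminus0\to\mathscr A_\theta$ homogeneous of degree $q$; $S^q(\mathbb R^n;\mathscr A_\theta)$ is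 the set of smooth $\rho:\mathbb R^n\to\mathscr A_\theta$ for which there are $\rho_{q-j}\in S_{q-j}$ with $\|\delta^\alpha\partial_\xi^\beta(\rho-\sum_{j<N}\rho_{q-j})(\xi)\|\le C_{N\alpha\beta}|\xi|^{\Re q-N-|\beta|}$ for $|\xi|\ge1$. $P_\rho$ is the pseudodifferential operator $P_\rho u=\iint e^{is\cdot\xi}\rho(\xi)\alpha_{-s}(u)\,ds\,(2\pi)^{-n}d\xi$, i.e. $P_\rho(\sum u_kU^k)=\sum u_k\rho(k)U^k$; $\Psi^q(\mathscr A_\theta)=\{P_\rho:\rho\in S^q\}$. When $\Re q<-n$, $P\in\Psi^q$ extends to a trace-class operator on $\mathcal H_\theta$, the integral $\int\rho(\xi)\,d\xi$ and the series $\sum_k\rho(k)$ converge absolutely in $A_\theta$, and $P$ admits at least one normalized symbol. *)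

theory Defs
  imports "HOL-Analysis.Analysis"
begin

text \<open>Elements of A_theta are represented,
via the faithful GNS (left regular) representation on H_theta = l2(Z^n) (basis U^k = delta_k),
as bounded operators on l2(Z^n), given by their matrices M m k = (u delta_k, delta_m); the
C*-norm is the operator norm.\<close>

type_synonym 'n idx = "int^'n"

definition fsupp :: "('a \<Rightarrow> complex) \<Rightarrow> bool" where
  "fsupp f \<longleftrightarrow> finite {k. f k \<noteq> 0}"

definition l2fin :: "('a \<Rightarrow> complex) \<Rightarrow> real" where
  "l2fin f = sqrt (\<Sum>k\<in>{k. f k \<noteq> 0}. (cmod (f k))\<^sup>2)"

definition bil :: "('a \<Rightarrow> 'a \<Rightarrow> complex) \<Rightarrow> ('a \<Rightarrow> complex) \<Rightarrow> ('a \<Rightarrow> complex) \<Rightarrow> complex" where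
  "bil M f g = (\<Sum>m\<in>{m. g m \<noteq> 0}. \<Sum>k\<in>{k. f k \<noteq> 0}. cnj (g m) * M m k * f k)"

definition opvals :: "('a \<Rightarrow> 'a \<Rightarrow> complex) \<Rightarrow> real set" where
  "opvals M = {cmod (bil M f g) | f g. fsupp f \<and> fsupp g \<and> l2fin f \<le> 1 \<and> l2fin g \<le> 1}"

definition opnorm :: "('a \<Rightarrow> 'a \<Rightarrow> complex) \<Rightarrow> real" where
  "opnorm M = Sup (opvals M)"

lemma bil_zero_vec: "bil M (\<lambda>_. 0) g = 0" by (simp add: bil_def)

lemma zero_in_opvals: "0 \<in> opvals M"
  unfolding opvals_def
  by (rule CollectI, rule exI[of _ "\<lambda>_. 0"], rule exI[of _ "\<lambda>_. 0"])
     (simp add: bil_zero_vec fsupp_def l2fin_def)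

lemma opvals_ne: "opvals M \<noteq> {}" using zero_in_opvals by blast

lemma bil_add: "bil (\<lambda>m k. M m k + N m k) f g = bil M f g + bil N f g"
  by (simp add: bil_def sum.distrib ring_distribs)

lemma bil_uminus: "bil (\<lambda>m k. - M m k) f g = - bil M f g"
  by (simp add: bil_def sum_negf)

lemma bil_scale: "bil (\<lambda>m k. c * M m k) f g = c * bil M f g"
  by (simp add: bil_def sum_distrib_left mult.commute mult.left_commute)

lemma opvals_le: "bdd_above (opvals M) \<Longrightarrow> fsupp f \<Longrightarrow> fsupp g \<Longrightarrow> l2fin f \<le> 1 \<Longrightarrow> l2fin g \<le> 1
  \<Longrightarrow> cmod (bil M f g) \<le> opnorm M"
  unfolding opnorm_def by (rule cSup_upper) (auto simp: opvals_def)

lemma opnorm_le: "(\<And>f g. fsupp f \<Longrightarrow> fsupp g \<Longrightarrow> l2fin f \<le> 1 \<Longrightarrow> l2fin g \<le> 1 \<Longrightarrow> cmod (bil M f g) \<le> B)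
  \<Longrightarrow> opnorm M \<le> B"
  unfolding opnorm_def by (rule cSup_least[OF opvals_ne]) (auto simp: opvals_def)

lemma bdd_opvalsI: "(\<And>f g. fsupp f \<Longrightarrow> fsupp g \<Longrightarrow> l2fin f \<le> 1 \<Longrightarrow> l2fin g \<le> 1 \<Longrightarrow> cmod (bil M f g) \<le> B)
  \<Longrightarrow> bdd_above (opvals M)"
  unfolding opvals_def bdd_above_def by auto

lemma opnorm_nonneg: "bdd_above (opvals M) \<Longrightarrow> 0 \<le> opnorm M"
  unfolding opnorm_def using zero_in_opvals by (rule cSup_upper2) auto

typedef ('n::finite) bop = "{M :: 'n idx \<Rightarrow> 'n idx \<Rightarrow> complex. bdd_above (opvals M)}"
  by (rule exI[of _ "\<lambda>_ _. 0"]) (auto intro!: bdd_opvalsI[where B=0] simp: bil_def)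

setup_lifting type_definition_bop

lemma bdd_add: "bdd_above (opvals M) \<Longrightarrow> bdd_above (opvals N) \<Longrightarrow> bdd_above (opvals (\<lambda>m k. M m k + N m k))"
  apply (rule bdd_opvalsI[where B="opnorm M + opnorm N"])
  apply (simp only: bil_add)
  apply (rule order_trans[OF norm_triangle_ineq add_mono])
  by (rule opvals_le; assumption)+

lemma bdd_scale: "bdd_above (opvals M) \<Longrightarrow> bdd_above (opvals (\<lambda>m k. c * M m k))"
  apply (rule bdd_opvalsI[where B="cmod c * opnorm M"])
  apply (simp only: bil_scale norm_mult)
  by (simp add: mult_left_mono opvals_le)

lemma bdd_uminus: "bdd_above (opvals M) \<Longrightarrow> bdd_above (opvals (\<lambda>m k. - M m k))"
  using bdd_scale[of M "-1"] by simp

instantiation bop :: (finite) real_vector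
begin
lift_definition zero_bop :: "'a bop" is "\<lambda>_ _. 0"
  by (auto intro!: bdd_opvalsI[where B=0] simp: bil_def)
lift_definition plus_bop :: "'a bop \<Rightarrow> 'a bop \<Rightarrow> 'a bop" is "\<lambda>M N m k. M m k + N m k"
  by (rule bdd_add)
lift_definition uminus_bop :: "'a bop \<Rightarrow> 'a bop" is "\<lambda>M m k. - M m k"
  by (rule bdd_uminus)
lift_definition minus_bop :: "'a bop \<Rightarrow> 'a bop \<Rightarrow> 'a bop" is "\<lambda>M N m k. M m k - N m k"
  subgoal for M N using bdd_add[of M "\<lambda>m k. - N m k"] bdd_uminus[of N] by simp
  done
lift_definition scaleR_bop :: "real \<Rightarrow> 'a bop \<Rightarrow> 'a bop" is "\<lambda>r M m k. complex_of_real r * M m k"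
  by (rule bdd_scale)
instance
  apply standard
  apply (transfer, simp add: fun_eq_iff add.assoc)
  apply (transfer, simp add: fun_eq_iff add.commute)
  apply (transfer, simp add: fun_eq_iff)
  apply (transfer, simp add: fun_eq_iff)
  apply (transfer, simp add: fun_eq_iff)
  apply (transfer, simp add: fun_eq_iff distrib_left)
  apply (transfer, simp add: fun_eq_iff distrib_right)
  apply (transfer, simp add: fun_eq_iff)
  apply (transfer, simp add: fun_eq_iff)
  done
end

lemma opnorm_scale_le: "bdd_above (opvals N) \<Longrightarrow> opnorm (\<lambda>m k. c * N m k) \<le> cmod c * opnorm N"
  by (rule opnorm_le, simp only: bil_scale norm_mult) (simp add: mult_left_mono opvals_le)

lemma opnorm_uminus: "opnorm (\<lambda>m k. - M m k) = opnorm M"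
  by (simp add: opnorm_def opvals_def bil_uminus)

instantiation bop :: (finite) real_normed_vector
begin
lift_definition norm_bop :: "'a bop \<Rightarrow> real" is opnorm .
definition dist_bop :: "'a bop \<Rightarrow> 'a bop \<Rightarrow> real" where "dist_bop x y = norm (x - y)"
definition sgn_bop :: "'a bop \<Rightarrow> 'a bop" where "sgn_bop x = x /\<^sub>R norm x"
definition uniformity_bop :: "('a bop \<times> 'a bop) filter"
  where "uniformity_bop = (INF e\<in>{0 <..}. principal {(x, y). dist x y < e})"
definition open_bop :: "'a bop set \<Rightarrow> bool"
  where "open_bop S = (\<forall>x\<in>S. \<forall>\<^sub>F (x', y) in uniformity. x' = x \<longrightarrow> y \<in> S)"
instance
proof
  fix x y :: "'a bop" and a :: real
  show "(norm x = 0) = (x = 0)"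
  proof transfer
    fix M :: "'a idx \<Rightarrow> 'a idx \<Rightarrow> complex"
    assume b: "bdd_above (opvals M)"
    show "(opnorm M = 0) = (M = (\<lambda>_ _. 0))"
    proof
      assume "opnorm M = 0"
      show "M = (\<lambda>_ _. 0)"
      proof (rule ccontr)
        assume "M \<noteq> (\<lambda>_ _. 0)"
        then obtain m0 k0 where nz: "M m0 k0 \<noteq> 0" by (auto simp: fun_eq_iff)
        let ?dk = "\<lambda>x. if x = k0 then (1::complex) else 0"
        let ?dm = "\<lambda>x. if x = m0 then (1::complex) else 0"
        have s1: "{x. ?dk x \<noteq> 0} = {k0}" "{x. ?dm x \<noteq> 0} = {m0}" by auto
        have "bil M ?dk ?dm = M m0 k0" unfolding bil_def s1 by simp
        moreover have "cmod (bil M ?dk ?dm) \<le> opnorm M"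
          by (rule opvals_le[OF b]) (simp_all add: fsupp_def l2fin_def s1)
        ultimately show False using nz \<open>opnorm M = 0\<close> by simp
      qed
    next
      assume "M = (\<lambda>_ _. 0)"
      then show "opnorm M = 0"
        using b by (auto intro!: antisym opnorm_le opnorm_nonneg simp: bil_def)
    qed
  qed
  show "norm (x + y) \<le> norm x + norm y"
    apply transfer
    apply (rule opnorm_le)
    apply (simp only: bil_add)
    apply (rule order_trans[OF norm_triangle_ineq add_mono])
    by (rule opvals_le; assumption)+
  show "norm (a *\<^sub>R x) = \<bar>a\<bar> * norm x"
  proof transfer
    fix M :: "'a idx \<Rightarrow> 'a idx \<Rightarrow> complex" and a :: real
    assume b: "bdd_above (opvals M)"
    have le1: "opnorm (\<lambda>m k. complex_of_real a * M m k) \<le> \<bar>a\<bar> * opnorm M" for a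
      by (rule opnorm_le, simp only: bil_scale norm_mult)
         (simp add: mult_left_mono opvals_le[OF b])
    show "opnorm (\<lambda>m k. complex_of_real a * M m k) = \<bar>a\<bar> * opnorm M"
    proof (cases "a = 0")
      case True then show ?thesis
        using le1[of 0] opnorm_nonneg[OF bdd_scale[OF b, of 0]] by simp
    next
      case False
      have "opnorm M = opnorm (\<lambda>m k. complex_of_real (inverse a) * (complex_of_real a * M m k))"
        using False by (simp add: mult.assoc[symmetric] of_real_mult[symmetric])
      also have "\<dots> \<le> \<bar>inverse a\<bar> * opnorm (\<lambda>m k. complex_of_real a * M m k)"
        using opnorm_scale_le[OF bdd_scale[OF b], of "complex_of_real (inverse a)" "complex_of_real a"]
        by (simp add: norm_inverse)
      finally have "\<bar>a\<bar> * opnorm M \<le> opnorm (\<lambda>m k. complex_of_real a * M m k)"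
        using False by (simp add: field_simps)
      with le1[of a] show ?thesis by simp
    qed
  qed
qed (fact dist_bop_def sgn_bop_def uniformity_bop_def open_bop_def)+
end


lift_definition cscale :: "complex \<Rightarrow> 'n::finite bop \<Rightarrow> 'n bop" is "\<lambda>c M m k. c * M m k"
  by (rule bdd_scale)

definition rvec :: "int^'n::finite \<Rightarrow> real^'n" where
  "rvec k = (\<chi> i. real_of_int (k $ i))"

text \<open>U^k U^l = cocyc k l U^(k+l) for U^k = U_1^k_1 ... U_n^k_n, where U_j U_i = e^(2 i pi theta_ij) U_i U_j
  (the indices are ordered by the linear order of the index type).\<close>
definition cocyc :: "real^('n::{finite,linorder})^('n::{finite,linorder}) \<Rightarrow> int^('n::{finite,linorder}) \<Rightarrow> int^('n::{finite,linorder}) \<Rightarrow> complex" where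
  "cocyc \<theta> k l = cis (2 * pi * (\<Sum>p\<in>{p. fst p < snd p}.
       \<theta> $ fst p $ snd p * real_of_int (k $ snd p) * real_of_int (l $ fst p)))"

text \<open>The monomial U^k, acting on H_theta = l2(Z^n) by left multiplication: U^k delta_l = cocyc k l delta_(k+l).\<close>
definition Umon :: "real^('n::{finite,linorder})^('n::{finite,linorder}) \<Rightarrow> int^('n::{finite,linorder}) \<Rightarrow> ('n::{finite,linorder}) bop" where
  "Umon \<theta> k = Abs_bop (\<lambda>m l. if m = k + l then cocyc \<theta> k l else 0)"

definition Atheta :: "real^('n::{finite,linorder})^('n::{finite,linorder}) \<Rightarrow> ('n::{finite,linorder}) bop set" where
  "Atheta \<theta> = closure {(\<Sum>k\<in>S. cscale (a k) (Umon \<theta> k)) | a S. finite S}"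

text \<open>Matrix of delta^alpha u, where delta_j(U^k) = k_j U^k.\<close>
definition dmat :: "nat^'n \<Rightarrow> (int^'n \<Rightarrow> int^'n \<Rightarrow> complex) \<Rightarrow> (int^'n::finite \<Rightarrow> int^'n \<Rightarrow> complex)" where
  "dmat \<alpha> M m k = (\<Prod>j\<in>UNIV. of_int ((m - k) $ j) ^ (\<alpha> $ j)) * M m k"

definition delta :: "nat^'n \<Rightarrow> 'n::finite bop \<Rightarrow> 'n bop" where
  "delta \<alpha> u = Abs_bop (dmat \<alpha> (Rep_bop u))"

definition Asmooth :: "real^('n::{finite,linorder})^('n::{finite,linorder}) \<Rightarrow> ('n::{finite,linorder}) bop set" where
  "Asmooth \<theta> = {u \<in> Atheta \<theta>. \<forall>\<alpha>. \<exists>v\<in>Atheta \<theta>. Rep_bop v = dmat \<alpha> (Rep_bop u)}"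

definition mult :: "'n::finite bop \<Rightarrow> 'n bop \<Rightarrow> 'n bop" where
  "mult u v = Abs_bop (\<lambda>m k. \<Sum>\<^sub>\<infinity>l. Rep_bop u m l * Rep_bop v l k)"

definition adj :: "'n::finite bop \<Rightarrow> 'n bop" where
  "adj u = Abs_bop (\<lambda>m k. cnj (Rep_bop u k m))"

definition tau :: "'n::finite bop \<Rightarrow> complex" where
  "tau u = Rep_bop u 0 0"

text \<open>Fourier coefficient u_k of u = sum u_k U^k.\<close>
definition coef :: "'n::finite bop \<Rightarrow> int^'n \<Rightarrow> complex" where
  "coef u k = Rep_bop u k 0"

definition hinner :: "'n::finite bop \<Rightarrow> 'n bop \<Rightarrow> complex" where
  "hinner u v = tau (mult u (adj v))"

definition mabs :: "nat^'n::finite \<Rightarrow> nat" where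
  "mabs \<beta> = (\<Sum>i\<in>UNIV. \<beta> $ i)"

text \<open>f : S \<rightarrow> smooth algebra is smooth (for the Frechet topology given by the seminorms
  norm (delta^alpha u)), with D beta the partial derivative d_xi^beta f.\<close>
definition fsmooth :: "real^('n::{finite,linorder})^('n::{finite,linorder}) \<Rightarrow> (real^('n::{finite,linorder})) set \<Rightarrow> (real^('n::{finite,linorder}) \<Rightarrow> ('n::{finite,linorder}) bop)
    \<Rightarrow> (nat^('n::{finite,linorder}) \<Rightarrow> real^('n::{finite,linorder}) \<Rightarrow> ('n::{finite,linorder}) bop) \<Rightarrow> bool" where
  "fsmooth \<theta> S f D \<longleftrightarrow>
     (\<forall>\<xi>\<in>S. D 0 \<xi> = f \<xi>) \<and>
     (\<forall>\<beta>. \<forall>\<xi>\<in>S. D \<beta> \<xi> \<in> Asmooth \<theta>) \<and>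
     (\<forall>\<alpha> \<beta>. continuous_on S (\<lambda>\<xi>. delta \<alpha> (D \<beta> \<xi>))) \<and>
     (\<forall>\<alpha> \<beta> j. \<forall>\<xi>\<in>S.
        ((\<lambda>t. delta \<alpha> (D \<beta> (\<xi> + t *\<^sub>R axis j (1::real)))) has_vector_derivative
            delta \<alpha> (D (\<beta> + axis j (1::nat)) \<xi>)) (at 0))"

definition homsymb :: "real^('n::{finite,linorder})^('n::{finite,linorder}) \<Rightarrow> complex \<Rightarrow> (real^('n::{finite,linorder}) \<Rightarrow> ('n::{finite,linorder}) bop)
    \<Rightarrow> (nat^('n::{finite,linorder}) \<Rightarrow> real^('n::{finite,linorder}) \<Rightarrow> ('n::{finite,linorder}) bop) \<Rightarrow> bool" where
  "homsymb \<theta> p g G \<longleftrightarrow> fsmooth \<theta> (UNIV - {0}) g G \<and>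
     (\<forall>\<xi> t. \<xi> \<noteq> 0 \<longrightarrow> 0 < t \<longrightarrow> g (t *\<^sub>R \<xi>) = cscale (complex_of_real t powr p) (g \<xi>))"

definition Sq :: "real^('n::{finite,linorder})^('n::{finite,linorder}) \<Rightarrow> complex \<Rightarrow> (real^('n::{finite,linorder}) \<Rightarrow> ('n::{finite,linorder}) bop) set" where
  "Sq \<theta> q = {\<rho>. \<exists>D. fsmooth \<theta> UNIV \<rho> D \<and>
     (\<exists>h H. (\<forall>j. homsymb \<theta> (q - of_nat j) (h j) (H j)) \<and>
        (\<forall>N \<alpha> \<beta>. \<exists>C. \<forall>\<xi>. 1 \<le> norm \<xi> \<longrightarrow>
            norm (delta \<alpha> (D \<beta> \<xi> - (\<Sum>j<N. H j \<beta> \<xi>)))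
              \<le> C * norm \<xi> powr (Re q - real N - real (mabs \<beta>))))}"

definition Prho :: "real^('n::{finite,linorder})^('n::{finite,linorder}) \<Rightarrow> (real^('n::{finite,linorder}) \<Rightarrow> ('n::{finite,linorder}) bop) \<Rightarrow> ('n::{finite,linorder}) bop \<Rightarrow> ('n::{finite,linorder}) bop" where
  "Prho \<theta> \<rho> u = (\<Sum>\<^sub>\<infinity>k. cscale (coef u k) (mult (\<rho> (rvec k)) (Umon \<theta> k)))"

definition Psi :: "real^('n::{finite,linorder})^('n::{finite,linorder}) \<Rightarrow> complex \<Rightarrow> (('n::{finite,linorder}) bop \<Rightarrow> ('n::{finite,linorder}) bop) set" where
  "Psi \<theta> q = {P. \<exists>\<rho>\<in>Sq \<theta> q. \<forall>u\<in>Asmooth \<theta>. P u = Prho \<theta> \<rho> u}"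

definition Trace :: "real^('n::{finite,linorder})^('n::{finite,linorder}) \<Rightarrow> (('n::{finite,linorder}) bop \<Rightarrow> ('n::{finite,linorder}) bop) \<Rightarrow> complex" where
  "Trace \<theta> P = (\<Sum>\<^sub>\<infinity>k. hinner (P (Umon \<theta> k)) (Umon \<theta> k))"

definition normalized :: "(real^'n \<Rightarrow> 'n::finite bop) \<Rightarrow> bool" where
  "normalized \<rho> \<longleftrightarrow> integral UNIV \<rho> = (\<Sum>\<^sub>\<infinity>k. \<rho> (rvec k))"

end

theory Submission
  imports Defs
begin

text \<open>For the monomial basis one has \<open>P\<^sub>\<rho> U\<^sup>k = \<rho>(k) U\<^sup>k\<close> and
  \<open>(u U\<^sup>k, U\<^sup>k) = \<tau>(u)\<close>, so \<open>Trace P = \<Sum>\<^sub>k \<tau>(\<rho>(k))\<close>.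
  Since \<open>\<rho>\<close> is continuous and \<open>O(|\<xi>|\<^sup>Re q)\<close> with \<open>Re q < -n\<close>, it is dominated by a
  multiple of \<open>\<Prod>\<^sub>i max(1, |\<xi>\<^sub>i|) powr (-t)\<close> with \<open>t = - Re q / n > 1\<close>, a weight that is integrable
  over \<open>\<real>\<^sup>n\<close> and summable over \<open>\<int>\<^sup>n\<close> because it factors into one-dimensional ones.
  Hence \<open>\<rho>\<close> is integrable and absolutely summable in the Banach space of bounded
  operators, and the continuous linear form \<open>\<tau>\<close> commutes with both the sum and the
  integral; normalization identifies the two.\<close>

lemma cmod_entry_le_opnorm:
  assumes "bdd_above (opvals M)"
  shows "cmod (M m k) \<le> opnorm M"
proof -
  let ?dk = "\<lambda>x. if x = k then (1::complex) else 0"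
  let ?dm = "\<lambda>x. if x = m then (1::complex) else 0"
  have supp: "{x. ?dk x \<noteq> 0} = {k}" "{x. ?dm x \<noteq> 0} = {m}" by auto
  have "bil M ?dk ?dm = M m k" unfolding bil_def supp by simp
  moreover have "cmod (bil M ?dk ?dm) \<le> opnorm M"
    by (rule opvals_le[OF assms]) (simp_all add: fsupp_def l2fin_def supp)
  ultimately show ?thesis by simp
qed

lemma bdd_opvals_Rep_bop: "bdd_above (opvals (Rep_bop x))"
  using Rep_bop by auto

lemma cmod_Rep_bop_le_norm: "cmod (Rep_bop x m k) \<le> norm x"
  using cmod_entry_le_opnorm[OF bdd_opvals_Rep_bop] by (simp add: norm_bop.rep_eq)

lemma cmod_bil_Rep_bop_le_norm:
  "fsupp f \<Longrightarrow> fsupp g \<Longrightarrow> l2fin f \<le> 1 \<Longrightarrow> l2fin g \<le> 1 \<Longrightarrow> cmod (bil (Rep_bop x) f g) \<le> norm x"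
  using opvals_le[OF bdd_opvals_Rep_bop] by (simp add: norm_bop.rep_eq)

lemma Rep_bop_minus: "Rep_bop (x - y) = (\<lambda>m k. Rep_bop x m k - Rep_bop y m k)"
  by (simp add: minus_bop.rep_eq)

lemma opnorm_entrywise_limit_le:
  fixes Y :: "nat \<Rightarrow> 'n::finite bop"
  assumes lim: "\<And>m k. (\<lambda>j. Rep_bop (Y j) m k) \<longlonglongrightarrow> L m k"
    and bound: "eventually (\<lambda>j. norm (Y j) \<le> B) sequentially"
  shows "bdd_above (opvals L)" and "opnorm L \<le> B"
proof -
  have le_B: "cmod (bil L f g) \<le> B"
    if h: "fsupp f" "fsupp g" "l2fin f \<le> 1" "l2fin g \<le> 1" for f g
  proof (rule tendsto_le[OF trivial_limit_sequentially tendsto_const tendsto_norm])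
    show "(\<lambda>j. bil (Rep_bop (Y j)) f g) \<longlonglongrightarrow> bil L f g"
      unfolding bil_def by (intro tendsto_intros lim)
    show "eventually (\<lambda>j. cmod (bil (Rep_bop (Y j)) f g) \<le> B) sequentially"
      using bound by eventually_elim (rule order_trans[OF cmod_bil_Rep_bop_le_norm[OF h]])
  qed
  show "bdd_above (opvals L)" by (rule bdd_opvalsI[OF le_B])
  show "opnorm L \<le> B" by (rule opnorm_le[OF le_B])
qed

instance bop :: (finite) complete_space
proof
  fix X :: "nat \<Rightarrow> 'a bop"
  assume "Cauchy X"
  then have Cauchy_norm: "\<exists>N. \<forall>i\<ge>N. \<forall>j\<ge>N. norm (X i - X j) < e" if "e > 0" for e
    using that unfolding Cauchy_def dist_norm by blast
  have "Cauchy (\<lambda>i. Rep_bop (X i) m k)" for m k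
  proof (rule CauchyI)
    fix e :: real assume "e > 0"
    with Cauchy_norm obtain N where "\<forall>i\<ge>N. \<forall>j\<ge>N. norm (X i - X j) < e" by blast
    then show "\<exists>N. \<forall>i\<ge>N. \<forall>j\<ge>N. norm (Rep_bop (X i) m k - Rep_bop (X j) m k) < e"
      using cmod_Rep_bop_le_norm[of "X i - X j" m k for i j]
      by (metis (no_types, lifting) Rep_bop_minus dist_norm order_le_less_trans)
  qed
  then obtain L where L: "\<And>m k. (\<lambda>i. Rep_bop (X i) m k) \<longlonglongrightarrow> L m k"
    unfolding Cauchy_convergent_iff convergent_def by metis
  obtain B where "\<And>i. norm (X i) \<le> B"
    using Cauchy_Bseq[OF \<open>Cauchy X\<close>] by (auto simp: Bseq_def)
  then have "bdd_above (opvals L)"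
    by (intro opnorm_entrywise_limit_le(1)[OF L, of B]) simp
  then have Rep_x: "Rep_bop (Abs_bop L) = L"
    by (simp add: Abs_bop_inverse)
  have "X \<longlonglongrightarrow> Abs_bop L"
  proof (rule LIMSEQ_I)
    fix r :: real assume "0 < r"
    then obtain N where N: "\<forall>i\<ge>N. \<forall>j\<ge>N. norm (X i - X j) < r / 2"
      using Cauchy_norm[of "r / 2"] by auto
    have "norm (X i - Abs_bop L) \<le> r / 2" if "N \<le> i" for i
      unfolding norm_bop.rep_eq Rep_bop_minus Rep_x
    proof (rule opnorm_entrywise_limit_le(2))
      show "(\<lambda>j. Rep_bop (X i - X j) m k) \<longlonglongrightarrow> Rep_bop (X i) m k - L m k" for m k
        unfolding Rep_bop_minus by (intro tendsto_intros L)
      show "eventually (\<lambda>j. norm (X i - X j) \<le> r / 2) sequentially"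
        using N \<open>N \<le> i\<close> by (auto intro: less_imp_le eventually_sequentiallyI[of N])
    qed
    moreover have "r / 2 < r" using \<open>0 < r\<close> by simp
    ultimately show "\<exists>N. \<forall>i\<ge>N. norm (X i - Abs_bop L) < r"
      by (meson order_le_less_trans)
  qed
  then show "convergent X" unfolding convergent_def by blast
qed

instance bop :: (finite) banach ..

lemma bounded_linear_tau: "bounded_linear (tau :: 'n::finite bop \<Rightarrow> complex)"
proof (rule bounded_linear_intro[where K=1])
  fix x y :: "'n bop" and r :: real
  show "tau (x + y) = tau x + tau y" by (simp add: tau_def plus_bop.rep_eq)
  show "tau (r *\<^sub>R x) = r *\<^sub>R tau x" by (simp add: tau_def scaleR_bop.rep_eq scaleR_conv_of_real)
  show "norm (tau x) \<le> norm x * 1" using cmod_Rep_bop_le_norm[of x 0 0] by (simp add: tau_def)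
qed


lemma infsum_UNIV_single:
  fixes f :: "'a \<Rightarrow> 'b::{comm_monoid_add, t2_space}"
  assumes "\<And>x. x \<noteq> a \<Longrightarrow> f x = 0"
  shows "infsum f UNIV = f a"
proof -
  have "infsum f UNIV = infsum f {a}"
    by (rule infsum_cong_neutral) (use assms in auto)
  then show ?thesis by simp
qed

lemma l2fin_le_1_iff: "l2fin f \<le> 1 \<longleftrightarrow> (\<Sum>k\<in>{k. f k \<noteq> 0}. (cmod (f k))\<^sup>2) \<le> 1"
  unfolding l2fin_def by simp

lemma bdd_opvals_id: "bdd_above (opvals (\<lambda>m k::'a. if m = k then (1::complex) else 0))"
proof (rule bdd_opvalsI[where B=1])
  fix f g :: "'a \<Rightarrow> complex"
  assume "fsupp f" "fsupp g" and l2: "l2fin f \<le> 1" "l2fin g \<le> 1"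
  let ?F = "{k. f k \<noteq> 0}" and ?G = "{k. g k \<noteq> 0}"
  have fin: "finite ?F" "finite ?G" using \<open>fsupp f\<close> \<open>fsupp g\<close> by (auto simp: fsupp_def)
  have "bil (\<lambda>m k. if m = k then 1 else 0) f g = (\<Sum>m\<in>?G. if m \<in> ?F then cnj (g m) * f m else 0)"
    unfolding bil_def
  proof (intro sum.cong refl)
    fix m
    have eq: "(\<lambda>k. cnj (g m) * (if m = k then 1 else 0) * f k) = (\<lambda>k. if m = k then cnj (g m) * f m else 0)"
      by auto
    show "(\<Sum>k\<in>?F. cnj (g m) * (if m = k then 1 else 0) * f k) = (if m \<in> ?F then cnj (g m) * f m else 0)"
      unfolding eq by (rule sum.delta'[OF fin(1)])
  qed
  also have "\<dots> = (\<Sum>m\<in>?G \<inter> ?F. cnj (g m) * f m)"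
    using fin by (simp add: sum.inter_restrict)
  finally have "cmod (bil (\<lambda>m k. if m = k then 1 else 0) f g)
      \<le> (\<Sum>m\<in>?G \<inter> ?F. cmod (g m) * cmod (f m))"
    by (simp add: norm_mult order_trans[OF norm_sum])
  also have "\<dots> \<le> (\<Sum>m\<in>?G \<inter> ?F. ((cmod (g m))\<^sup>2 + (cmod (f m))\<^sup>2) / 2)"
  proof (rule sum_mono)
    fix m
    show "cmod (g m) * cmod (f m) \<le> ((cmod (g m))\<^sup>2 + (cmod (f m))\<^sup>2) / 2"
      using sum_squares_bound[of "cmod (g m)" "cmod (f m)"] by (simp add: mult.assoc)
  qed
  also have "\<dots> \<le> ((\<Sum>m\<in>?G. (cmod (g m))\<^sup>2) + (\<Sum>m\<in>?F. (cmod (f m))\<^sup>2)) / 2"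
    unfolding sum_divide_distrib[symmetric] sum.distrib
    using fin by (intro divide_right_mono add_mono sum_mono2) auto
  also have "\<dots> \<le> 1" using l2 by (simp add: l2fin_le_1_iff)
  finally show "cmod (bil (\<lambda>m k. if m = k then 1 else 0) f g) \<le> 1" .
qed

text \<open>Precomposing with a translation and multiplying by a phase are unitary changes of
  the test vectors, so they do not change the operator norm bound.\<close>
lemma bdd_opvals_shift_phase:
  fixes A :: "'a::ab_group_add \<Rightarrow> 'a \<Rightarrow> complex"
  assumes "bdd_above (opvals A)" and phase: "\<And>j. cmod (\<phi> j) = 1"
  shows "bdd_above (opvals (\<lambda>m j. A m (j + a) * \<phi> j))"
proof (rule bdd_opvalsI[where B="opnorm A"])
  fix f g :: "'a \<Rightarrow> complex"
  assume "fsupp f" "fsupp g" "l2fin f \<le> 1" "l2fin g \<le> 1"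
  define f' where "f' l = \<phi> (l - a) * f (l - a)" for l
  have "\<phi> j \<noteq> 0" for j using phase[of j] by auto
  then have supp: "{l. f' l \<noteq> 0} = (\<lambda>j. j + a) ` {j. f j \<noteq> 0}"
    by (auto simp: f'_def image_iff) (metis diff_add_cancel)
  have inj: "inj_on (\<lambda>j. j + a) X" for X by (auto simp: inj_on_def)
  have "fsupp f'" using \<open>fsupp f\<close> unfolding fsupp_def supp by simp
  have "(\<Sum>k\<in>{k. f' k \<noteq> 0}. (cmod (f' k))\<^sup>2) = (\<Sum>k\<in>{k. f k \<noteq> 0}. (cmod (f k))\<^sup>2)"
    unfolding supp by (subst sum.reindex[OF inj]) (simp add: f'_def norm_mult phase)
  then have "l2fin f' \<le> 1" using \<open>l2fin f \<le> 1\<close> by (simp add: l2fin_def)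
  have "bil (\<lambda>m j. A m (j + a) * \<phi> j) f g = bil A f' g"
    unfolding bil_def supp
    by (rule sum.cong[OF refl], subst sum.reindex[OF inj]) (simp add: f'_def mult.assoc mult.left_commute)
  then show "cmod (bil (\<lambda>m j. A m (j + a) * \<phi> j) f g) \<le> opnorm A"
    using opvals_le[OF assms(1) \<open>fsupp f'\<close> \<open>fsupp g\<close> \<open>l2fin f' \<le> 1\<close> \<open>l2fin g \<le> 1\<close>] by simp
qed

lemma bdd_opvals_weighted_shift:
  fixes a :: "'a::ab_group_add"
  assumes "\<And>j. cmod (\<phi> j) = 1"
  shows "bdd_above (opvals (\<lambda>m j. if m = j + a then \<phi> j else 0))"
proof -
  have "(\<lambda>m j. (if m = j + a then 1 else 0) * \<phi> j) = (\<lambda>m j. if m = j + a then \<phi> j else 0)"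
    by (simp add: fun_eq_iff)
  then show ?thesis using bdd_opvals_shift_phase[where \<phi>=\<phi> and a=a, OF bdd_opvals_id assms] by simp
qed

lemma cmod_cocyc: "cmod (cocyc \<theta> k l) = 1"
  by (simp add: cocyc_def)

lemma Rep_Umon: "Rep_bop (Umon \<theta> k) = (\<lambda>m l. if m = k + l then cocyc \<theta> k l else 0)"
proof -
  have "(\<lambda>m l. if m = k + l then cocyc \<theta> k l else 0) = (\<lambda>m l. if m = l + k then cocyc \<theta> k l else 0)"
    by (simp add: add.commute)
  then show ?thesis
    unfolding Umon_def using bdd_opvals_weighted_shift[where \<phi>="cocyc \<theta> k" and a=k, OF cmod_cocyc]
    by (simp add: Abs_bop_inverse)
qed

lemma Rep_mult_Umon: "Rep_bop (mult x (Umon \<theta> k)) = (\<lambda>m j. Rep_bop x m (j + k) * cocyc \<theta> k j)"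
proof -
  have "(\<lambda>m j. \<Sum>\<^sub>\<infinity>l. Rep_bop x m l * Rep_bop (Umon \<theta> k) l j) = (\<lambda>m j. Rep_bop x m (j + k) * cocyc \<theta> k j)"
    unfolding Rep_Umon
    by (intro ext, subst infsum_UNIV_single[where a="j + k" for j]) (auto simp: add.commute)
  then show ?thesis
    unfolding mult_def
    using bdd_opvals_shift_phase[where \<phi>="cocyc \<theta> k", OF bdd_opvals_Rep_bop cmod_cocyc]
    by (simp add: Abs_bop_inverse)
qed

lemma Rep_mult_adj_Umon:
  "Rep_bop (mult x (adj (Umon \<theta> k))) = (\<lambda>m j. Rep_bop x m (j + - k) * cnj (cocyc \<theta> k (j - k)))"
proof -
  have phase: "cmod (cnj (cocyc \<theta> k (j - k))) = 1" for j by (simp add: cmod_cocyc)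
  have "(\<lambda>m j. cnj (Rep_bop (Umon \<theta> k) j m)) = (\<lambda>m j. if m = j + - k then cnj (cocyc \<theta> k (j - k)) else 0)"
    unfolding Rep_Umon by (auto simp: fun_eq_iff)
  then have Rep_adj: "Rep_bop (adj (Umon \<theta> k)) = (\<lambda>m j. if m = j + - k then cnj (cocyc \<theta> k (j - k)) else 0)"
    unfolding adj_def using bdd_opvals_weighted_shift[where a="- k", OF phase] by (simp add: Abs_bop_inverse)
  have "(\<lambda>m j. \<Sum>\<^sub>\<infinity>l. Rep_bop x m l * Rep_bop (adj (Umon \<theta> k)) l j)
      = (\<lambda>m j. Rep_bop x m (j + - k) * cnj (cocyc \<theta> k (j - k)))"
    unfolding Rep_adj by (intro ext, subst infsum_UNIV_single[where a="j + - k" for j]) auto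
  then show ?thesis
    unfolding mult_def
    using bdd_opvals_shift_phase[where a="- k", OF bdd_opvals_Rep_bop phase] by (simp add: Abs_bop_inverse)
qed

lemma hinner_mult_Umon: "hinner (mult x (Umon \<theta> k)) (Umon \<theta> k) = tau x"
proof -
  have "cocyc \<theta> k (- k) * cnj (cocyc \<theta> k (- k)) = 1"
    using complex_norm_square[of "cocyc \<theta> k (- k)"] by (simp add: cmod_cocyc)
  then show ?thesis
    unfolding hinner_def tau_def Rep_mult_adj_Umon Rep_mult_Umon by (simp add: mult.assoc)
qed

lemma Rep_cscale: "Rep_bop (cscale c x) = (\<lambda>m k. c * Rep_bop x m k)"
  by (simp add: cscale.rep_eq)

lemma cscale_1: "cscale 1 x = x"
  by (simp add: Rep_bop_inject[symmetric] Rep_cscale)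

lemma cscale_0: "cscale 0 x = 0"
  by (simp add: Rep_bop_inject[symmetric] Rep_cscale zero_bop.rep_eq)

lemma cscale_Umon_in_Atheta: "cscale c (Umon \<theta> k) \<in> Atheta \<theta>"
proof -
  have "\<exists>a S. cscale c (Umon \<theta> k) = (\<Sum>k\<in>S. cscale (a k) (Umon \<theta> k)) \<and> finite S"
    by (rule exI[of _ "\<lambda>_. c"], rule exI[of _ "{k}"]) simp
  then have "cscale c (Umon \<theta> k) \<in> {(\<Sum>k\<in>S. cscale (a k) (Umon \<theta> k)) | a S. finite S}" by simp
  then show ?thesis unfolding Atheta_def by (rule subsetD[OF closure_subset])
qed

lemma Umon_in_Asmooth: "Umon \<theta> k \<in> Asmooth \<theta>"
  unfolding Asmooth_def
proof (intro CollectI conjI allI)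
  show "Umon \<theta> k \<in> Atheta \<theta>" using cscale_Umon_in_Atheta[of 1] by (simp add: cscale_1)
next
  fix \<alpha>
  let ?c = "(\<Prod>j\<in>UNIV. of_int (k $ j) ^ (\<alpha> $ j)) :: complex"
  have "Rep_bop (cscale ?c (Umon \<theta> k)) = dmat \<alpha> (Rep_bop (Umon \<theta> k))"
    unfolding Rep_cscale Rep_Umon dmat_def by (auto simp: fun_eq_iff)
  then show "\<exists>v\<in>Atheta \<theta>. Rep_bop v = dmat \<alpha> (Rep_bop (Umon \<theta> k))"
    using cscale_Umon_in_Atheta by blast
qed

lemma Prho_Umon: "Prho \<theta> \<rho> (Umon \<theta> k) = mult (\<rho> (rvec k)) (Umon \<theta> k)"
  unfolding Prho_def
  by (subst infsum_UNIV_single[where a=k]) (auto simp: coef_def Rep_Umon cocyc_def cscale_1 cscale_0)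

lemma Trace_eq_infsum_tau:
  assumes "\<forall>u\<in>Asmooth \<theta>. P u = Prho \<theta> \<rho> u"
  shows "Trace \<theta> P = (\<Sum>\<^sub>\<infinity>k. tau (\<rho> (rvec k)))"
  unfolding Trace_def
  by (rule infsum_cong) (simp add: assms Umon_in_Asmooth Prho_Umon hinner_mult_Umon)


section \<open>A product weight with integrable and summable decay\<close>

definition decay_weight :: "real \<Rightarrow> real \<Rightarrow> real" where
  "decay_weight t y = max 1 \<bar>y\<bar> powr (-t)"

definition product_weight :: "real \<Rightarrow> real^'n::finite \<Rightarrow> real" where
  "product_weight t \<xi> = (\<Prod>i\<in>UNIV. decay_weight t (\<xi> $ i))"

lemma decay_weight_nonneg: "0 \<le> decay_weight t y"
  by (simp add: decay_weight_def)

lemma decay_weight_minus: "decay_weight t (-y) = decay_weight t y"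
  by (simp add: decay_weight_def)

lemma continuous_on_decay_weight: "continuous_on A (decay_weight t)"
  unfolding decay_weight_def by (intro continuous_intros) auto

lemma decay_weight_integrable_atLeast:
  assumes "t > 1"
  shows "decay_weight t integrable_on {1..}"
proof -
  have "((\<lambda>x. x powr (-t)) has_integral -(1 powr (-t+1)) / (-t+1)) {1..}"
    by (rule has_integral_powr_to_inf) (use assms in auto)
  then have "(decay_weight t has_integral -(1 powr (-t+1)) / (-t+1)) {1..}"
    by (rule has_integral_eq[rotated]) (simp add: decay_weight_def)
  then show ?thesis by blast
qed

lemma decay_weight_integrable_atMost:
  assumes "t > 1"
  shows "decay_weight t integrable_on {..-1}"
proof -
  have "decay_weight t absolutely_integrable_on {1..}"
    by (rule nonnegative_absolutely_integrable_1[OF decay_weight_integrable_atLeast[OF assms]])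
       (simp add: decay_weight_nonneg)
  then have "(\<lambda>x. decay_weight t (-x)) absolutely_integrable_on {..-1} \<and>
      integral {..-1} (\<lambda>x. decay_weight t (-x)) = integral {1..} (decay_weight t)"
    by (subst has_absolute_integral_reflect_real[where B="{1..}"]) (auto simp: image_def)
  then show ?thesis
    using set_lebesgue_integral_eq_integral(1) by (force simp: decay_weight_minus)
qed

lemma decay_weight_integrable:
  assumes "t > 1"
  shows "decay_weight t integrable_on UNIV"
proof -
  have "decay_weight t integrable_on {-1..1}"
    by (rule integrable_continuous_interval[OF continuous_on_decay_weight])
  then have "decay_weight t integrable_on {-1..}"
    using decay_weight_integrable_atLeast[OF assms]
    by (rule integrable_Un') (auto intro: negligible_subset[of "{1}"])
  with decay_weight_integrable_atMost[OF assms] show ?thesis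
    by (rule integrable_Un') (auto intro: negligible_subset[of "{-1}"])
qed

lemma decay_weight_summable_int:
  assumes "t > 1"
  shows "(\<lambda>m::int. decay_weight t (of_int m)) summable_on UNIV"
proof -
  have "summable (\<lambda>n::nat. real n powr (-t))"
    using assms by (simp add: summable_real_powr_iff)
  moreover have "eventually (\<lambda>n. decay_weight t (real n) = real n powr (-t)) sequentially"
    using eventually_ge_at_top[of "1::nat"] by eventually_elim (simp add: decay_weight_def)
  ultimately have "summable (\<lambda>n::nat. decay_weight t (real n))"
    using summable_cong by fastforce
  then have nat: "(\<lambda>n::nat. decay_weight t (real n)) summable_on UNIV"
    by (simp add: summable_on_UNIV_nonneg_real_iff decay_weight_nonneg)
  have "(\<lambda>m::int. decay_weight t (of_int m)) summable_on range int"
    by (subst summable_on_reindex) (auto simp: o_def nat)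
  moreover have "(\<lambda>m::int. decay_weight t (of_int m)) summable_on range (\<lambda>n::nat. - int n)"
    by (subst summable_on_reindex) (auto simp: inj_on_def o_def nat decay_weight_minus)
  moreover have "range int \<union> range (\<lambda>n::nat. - int n) = UNIV"
    by (auto simp: image_iff intro: int_cases2)
  ultimately show ?thesis using summable_on_union by metis
qed

lemma prod_Basis_cart: "(\<Prod>b\<in>Basis. h (x \<bullet> b)) = (\<Prod>i\<in>UNIV. h ((x::real^'n::finite) $ i))"
proof -
  have Basis: "(Basis :: (real^'n) set) = (\<lambda>i. axis i 1) ` UNIV"
    unfolding Basis_vec_def by auto
  have "inj (\<lambda>i::'n. axis i (1::real))" by (auto simp: inj_on_def axis_eq_axis)
  then show ?thesis unfolding Basis by (subst prod.reindex) (simp_all add: inner_axis)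
qed

lemma product_weight_integrable:
  assumes "t > 1"
  shows "(product_weight t :: real^'n::finite \<Rightarrow> real) integrable_on UNIV"
proof -
  have borel: "decay_weight t \<in> borel_measurable borel"
    by (rule borel_measurable_continuous_onI[OF continuous_on_decay_weight])
  have "(\<integral>\<^sup>+x. ennreal (decay_weight t x) \<partial>lborel) = ennreal (integral UNIV (decay_weight t))"
    using decay_weight_integrable[OF assms]
    by (intro nn_integral_has_integral_lborel[OF borel decay_weight_nonneg]) blast
  then have finite_1: "(\<integral>\<^sup>+x. ennreal (decay_weight t x) \<partial>lborel) < \<infinity>" by simp
  have "(\<integral>\<^sup>+x. ennreal (product_weight t (x::real^'n)) \<partial>lborel)
      = (\<integral>\<^sup>+x. (\<Prod>b\<in>(Basis::(real^'n) set). ennreal (decay_weight t (x \<bullet> b))) \<partial>lborel)"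
    by (simp add: product_weight_def prod_Basis_cart prod_ennreal decay_weight_nonneg)
  also have "\<dots> = (\<Prod>b\<in>(Basis::(real^'n) set). (\<integral>\<^sup>+x. ennreal (decay_weight t x) \<partial>lborel))"
    by (rule nn_integral_lborel_prod) (use borel in auto)
  also have "\<dots> < \<infinity>"
    using finite_1 by (simp add: power_less_top_ennreal)
  finally have "(\<integral>\<^sup>+x. ennreal (norm (product_weight t (x::real^'n))) \<partial>lborel) < \<infinity>"
    by (simp add: product_weight_def prod_nonneg decay_weight_nonneg)
  moreover have "(product_weight t :: real^'n \<Rightarrow> real) \<in> borel_measurable lborel"
    unfolding product_weight_def
    by (intro borel_measurable_prod measurable_compose[OF _ borel]) auto
  ultimately show ?thesis
    by (intro integrable_on_lborel) (simp add: integrable_iff_bounded)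
qed

lemma product_weight_summable_lattice:
  assumes "t > 1"
  shows "(\<lambda>k::int^'n::finite. product_weight t (rvec k)) summable_on UNIV"
proof -
  have "Infinite_Set_Sum.abs_summable_on (\<lambda>g::'n \<Rightarrow> int. \<Prod>i\<in>UNIV. decay_weight t (of_int (g i)))
      (PiE UNIV (\<lambda>_. UNIV))"
  proof (rule abs_summable_on_prod_PiE)
    fix i :: 'n
    have "(\<lambda>m::int. norm (decay_weight t (of_int m))) summable_on UNIV"
      using decay_weight_summable_int[OF assms] by (simp add: decay_weight_nonneg)
    then show "Infinite_Set_Sum.abs_summable_on (\<lambda>m::int. decay_weight t (of_int m)) UNIV"
      by (rule abs_summable_equivalent[THEN iffD1])
  qed auto
  then have "(\<lambda>g::'n \<Rightarrow> int. norm (\<Prod>i\<in>UNIV. decay_weight t (of_int (g i)))) summable_on UNIV"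
    by (intro abs_summable_equivalent[THEN iffD2]) simp
  then have summable_fun: "(\<lambda>g::'n \<Rightarrow> int. \<Prod>i\<in>UNIV. decay_weight t (of_int (g i))) summable_on UNIV"
    by (simp add: prod_nonneg decay_weight_nonneg)
  have "inj (vec_lambda :: ('n \<Rightarrow> int) \<Rightarrow> int^'n)"
    by (rule injI) (metis vec_lambda_inverse UNIV_I)
  moreover have "range (vec_lambda :: ('n \<Rightarrow> int) \<Rightarrow> int^'n) = UNIV"
    by (metis surj_def vec_lambda_eta)
  ultimately show ?thesis
    using summable_on_reindex[of "vec_lambda :: ('n \<Rightarrow> int) \<Rightarrow> int^'n" UNIV
        "\<lambda>k. product_weight t (rvec k)"] summable_fun
    by (simp add: o_def product_weight_def rvec_def)
qed

lemma product_weight_lower_bound: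
  assumes "t \<ge> 0"
  shows "(1 + norm \<xi>) powr (-(t * real CARD('n))) \<le> product_weight t (\<xi>::real^'n::finite)"
proof -
  have "(\<Prod>i\<in>(UNIV::'n set). (1 + norm \<xi>) powr (-t)) \<le> product_weight t \<xi>"
    unfolding product_weight_def
  proof (intro prod_mono conjI)
    fix i
    have "max 1 \<bar>\<xi> $ i\<bar> \<le> 1 + norm \<xi>" using component_le_norm_cart[of \<xi> i] by simp
    then show "(1 + norm \<xi>) powr (-t) \<le> decay_weight t (\<xi> $ i)"
      unfolding decay_weight_def using assms by (intro powr_mono2') auto
  qed simp
  moreover have "(\<Prod>i\<in>(UNIV::'n set). (1 + norm \<xi>) powr (-t)) = (1 + norm \<xi>) powr (-(t * real CARD('n)))"
  proof -
    have "1 + norm \<xi> \<noteq> 0" using norm_ge_zero[of \<xi>] by linarith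
    then have "((1 + norm \<xi>) powr (-t)) ^ CARD('n) = ((1 + norm \<xi>) powr (-t)) powr (real CARD('n))"
      by (intro powr_realpow[symmetric]) simp
    then show ?thesis by (simp add: powr_powr)
  qed
  ultimately show ?thesis by simp
qed

lemma powr_max_1_le:
  assumes "s \<ge> 0"
  shows "max 1 (norm (x::'a::real_normed_vector)) powr (-s) \<le> 2 powr s * (1 + norm x) powr (-s)"
proof -
  have "(2 * max 1 (norm x)) powr (-s) \<le> (1 + norm x) powr (-s)"
    using assms by (intro powr_mono2') (auto simp: add_pos_nonneg)
  then have "2 powr s * (2 powr (-s) * max 1 (norm x) powr (-s)) \<le> 2 powr s * (1 + norm x) powr (-s)"
    by (simp add: powr_mult)
  then show ?thesis
    by (simp add: mult.assoc[symmetric] powr_add[symmetric])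
qed

lemma power_decay_dominated_by_product_weight:
  fixes f :: "real^'n::finite \<Rightarrow> 'b::real_normed_vector"
  assumes "continuous_on UNIV f"
    and decay: "\<And>\<xi>. 1 \<le> norm \<xi> \<Longrightarrow> norm (f \<xi>) \<le> C * norm \<xi> powr (-s)"
    and "s > CARD('n)"
  shows "\<exists>K. \<forall>\<xi>. norm (f \<xi>) \<le> K * product_weight (s / CARD('n)) \<xi>"
proof -
  have "compact (f ` cball 0 1)"
    by (rule compact_continuous_image[OF continuous_on_subset[OF assms(1)]]) auto
  then obtain M where M: "\<And>x. x \<in> cball 0 1 \<Longrightarrow> norm (f x) \<le> M"
    using compact_imp_bounded bounded_iff by (metis image_eqI)
  define K where "K = max M C"
  have "norm (f 0) \<le> M" using M[of 0] by simp
  then have "0 \<le> M" using norm_ge_zero order_trans by blast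
  then have "0 \<le> K" by (simp add: K_def le_max_iff_disj)
  have "s \<ge> 0" using assms(3) by linarith
  have bound: "norm (f \<xi>) \<le> K * max 1 (norm \<xi>) powr (-s)" for \<xi>
  proof (cases "norm \<xi> \<le> 1")
    case True
    then show ?thesis using M[of \<xi>] by (simp add: K_def)
  next
    case False
    have "C * norm \<xi> powr (-s) \<le> K * norm \<xi> powr (-s)"
      by (rule mult_right_mono) (auto simp: K_def)
    then show ?thesis using decay[of \<xi>] False by simp
  qed
  have "norm (f \<xi>) \<le> (K * 2 powr s) * product_weight (s / CARD('n)) \<xi>" for \<xi>
  proof -
    have "norm (f \<xi>) \<le> K * (2 powr s * (1 + norm \<xi>) powr (-s))"
      using bound[of \<xi>] powr_max_1_le[OF \<open>s \<ge> 0\<close>, of \<xi>] \<open>0 \<le> K\<close> by (meson mult_left_mono order_trans)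
    also have "(1 + norm \<xi>) powr (-s) = (1 + norm \<xi>) powr (-((s / CARD('n)) * CARD('n)))"
      by simp
    also have "\<dots> \<le> product_weight (s / CARD('n)) \<xi>"
      by (rule product_weight_lower_bound) (use \<open>s \<ge> 0\<close> in simp)
    finally show ?thesis using \<open>0 \<le> K\<close> by (simp add: mult_left_mono mult.assoc)
  qed
  then show ?thesis by blast
qed

lemma power_decay_integrable_and_lattice_summable:
  fixes f :: "real^'n::finite \<Rightarrow> 'b::banach"
  assumes "continuous_on UNIV f"
    and "\<And>\<xi>. 1 \<le> norm \<xi> \<Longrightarrow> norm (f \<xi>) \<le> C * norm \<xi> powr (-s)"
    and "s > CARD('n)"
  shows "f integrable_on UNIV" and "(\<lambda>k. f (rvec k)) summable_on UNIV"
proof -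
  define t where "t = s / CARD('n)"
  have "t > 1" using assms(3) by (simp add: t_def)
  obtain K where K: "\<And>\<xi>. norm (f \<xi>) \<le> K * product_weight t \<xi>"
    using power_decay_dominated_by_product_weight[OF assms] unfolding t_def by blast
  show "f integrable_on UNIV"
  proof (rule integrable_on_all_intervals_integrable_bound[where g="\<lambda>x. K * product_weight t x"])
    show "(\<lambda>x. if x \<in> UNIV then f x else 0) integrable_on cbox a b" for a b
      using integrable_continuous[OF continuous_on_subset[OF assms(1)]] by simp
    show "(\<lambda>x. K * product_weight t x) integrable_on UNIV"
      using integrable_cmul[OF product_weight_integrable[OF \<open>t > 1\<close>], of K] by simp
  qed (use K in auto)
  have "(\<lambda>k. norm (K * product_weight t (rvec k))) summable_on (UNIV :: (int^'n) set)"
    using summable_on_cmult_right[OF product_weight_summable_lattice[OF \<open>t > 1\<close>], of "\<bar>K\<bar>"]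
    by (simp add: abs_mult product_weight_def prod_nonneg decay_weight_nonneg)
  then have "(\<lambda>k. norm (f (rvec k))) summable_on (UNIV :: (int^'n) set)"
    by (rule Infinite_Sum.abs_summable_on_comparison_test) (simp add: order_trans[OF K abs_ge_self])
  then show "(\<lambda>k. f (rvec k)) summable_on UNIV"
    by (rule Infinite_Sum.abs_summable_summable)
qed

lemma Sq_continuous_power_decay:
  assumes "\<rho> \<in> Sq \<theta> q"
  shows "continuous_on UNIV \<rho>" and "\<exists>C. \<forall>\<xi>. 1 \<le> norm \<xi> \<longrightarrow> norm (\<rho> \<xi>) \<le> C * norm \<xi> powr Re q"
proof -
  have delta_0: "delta 0 u = u" for u :: "'a bop"
    unfolding delta_def dmat_def by (simp add: Rep_bop_inverse)
  from assms obtain D h H where smooth: "fsmooth \<theta> UNIV \<rho> D" and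
    decay: "\<forall>N \<alpha> \<beta>. \<exists>C. \<forall>\<xi>. 1 \<le> norm \<xi> \<longrightarrow>
            norm (delta \<alpha> (D \<beta> \<xi> - (\<Sum>j<N. H j \<beta> \<xi>))) \<le> C * norm \<xi> powr (Re q - real N - real (mabs \<beta>))"
    unfolding Sq_def by blast
  have D_0: "D 0 = \<rho>" and "continuous_on UNIV (\<lambda>\<xi>. delta 0 (D 0 \<xi>))"
    using smooth unfolding fsmooth_def by blast+
  then show "continuous_on UNIV \<rho>" by (simp add: delta_0)
  show "\<exists>C. \<forall>\<xi>. 1 \<le> norm \<xi> \<longrightarrow> norm (\<rho> \<xi>) \<le> C * norm \<xi> powr Re q"
    using decay[rule_format, of 0 0 0] by (simp add: D_0 delta_0 mabs_def)
qed

theorem proposition13p21: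
  fixes \<theta> :: "real^('n::{finite,linorder})^('n::{finite,linorder})" and q :: complex
    and P :: "('n::{finite,linorder}) bop \<Rightarrow> ('n::{finite,linorder}) bop"
    and \<rho> :: "real^('n::{finite,linorder}) \<Rightarrow> ('n::{finite,linorder}) bop"
  assumes "CARD('n) \<ge> 2"
    and "transpose \<theta> = - \<theta>"
    and "Re q < - real CARD('n)"
    and "P \<in> Psi \<theta> q"
    and "\<rho> \<in> Sq \<theta> q"
    and "\<forall>u\<in>Asmooth \<theta>. P u = Prho \<theta> \<rho> u"
    and "normalized \<rho>"
  shows "Trace \<theta> P = integral UNIV (\<lambda>\<xi>. tau (\<rho> \<xi>))"
proof -
  define s where "s = - Re q"
  have "s > CARD('n)" using assms(3) by (simp add: s_def)
  obtain C where "\<And>\<xi>. 1 \<le> norm \<xi> \<Longrightarrow> norm (\<rho> \<xi>) \<le> C * norm \<xi> powr (-s)"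
    using Sq_continuous_power_decay(2)[OF assms(5)] by (auto simp: s_def)
  note integrable_summable = power_decay_integrable_and_lattice_summable
    [OF Sq_continuous_power_decay(1)[OF assms(5)] this \<open>s > CARD('n)\<close>]
  have "Trace \<theta> P = (\<Sum>\<^sub>\<infinity>k. tau (\<rho> (rvec k)))"
    using assms(6) by (rule Trace_eq_infsum_tau)
  also have "\<dots> = tau (\<Sum>\<^sub>\<infinity>k. \<rho> (rvec k))"
    using integrable_summable
    by (intro infsumI has_sum_bounded_linear[OF bounded_linear_tau has_sum_infsum]) simp
  also have "\<dots> = tau (integral UNIV \<rho>)"
    using assms(7) by (simp add: normalized_def)
  also have "\<dots> = integral UNIV (\<lambda>\<xi>. tau (\<rho> \<xi>))"
    using integral_linear[OF integrable_summable(1) bounded_linear_tau] by (simp add: o_def)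
  finally show ?thesis .
qed

end
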